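(* Let $n, M \ge 2$ be integers and let $W_1, \dots, W_M \in \mathbb{R}^{n \times n}$ be weighted adjacency matrices (nonnegative entries) of a time-evolving graph on the fixed vertex set $\{v_1, \dots, v_n\}$, such that every row of each $W_t$ has positive sum. Let $S_t = D_t^{-1} W_t$, where $D_t = \mathrm{diag}\big(\sum_j (W_t)_{1j}, \dots, \sum_j (W_t)_{nj}\big)$. Let $\boldsymbol{\mu}_1 = \frac{1}{n}\mathbb{1}$ and $\boldsymbol{\mu}_{t+1} = S_t^\top \boldsymbol{\mu}_t$ for $t = 1, \dots, M-1$; assume all entries of $\boldsymbol{\mu}_t$ are strictly positive for all $t \in \{1,\dots,M\}$, and let $D_{\mu_t} = \mathrm{diag}(\boldsymbol{\mu}_t)$. Define $K_t = S_t$ and $T_t = D_{\mu_{t+1}}^{-1} S_t^\top D_{\mu_t}$ for $t = 1, \dots, M-1$, and let $\mathbf{C} \in \mathbb{R}^{nM \times nM}$ be the block matrix with $n\times n$ blocks $\mathbf{C}_{[s,r]}$ given by: $\mathbf{C}_{[1,2]} = K_1$; for $2 \le t \le M-1$, $\mathbf{C}_{[t,t-1]} = \tfrac12 T_{t-1}$ and $\mathbf{C}_{[t,t+1]} = \tfrac12 K_t$; $\mathbf{C}_{[M,M-1]} = T_{M-1}$; all other blocks zero. Let $\mathbf{L} = I - \mathbf{C}$ (the spatio-temporal graph Laplacian). Then all eigenvalues of $\mathbf{L}$ are real and contained in $[0, 2]$, and the spectrum of $\mathbf{L}$ is symmetric about $1$, i.e., if $\nu$ is an eigenvalue of $\mathbf{L}$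 then so is $2 - \nu$.
   Context: $I$ denotes the $nM \times nM$ identity matrix. *)

theory Defs
  imports "Jordan_Normal_Form.Char_Poly"
begin

text \<open>Time-indexed data: W t for t = 1..M, each an n x n real matrix (vertices indexed 0..n-1).\<close>

definition row_sum :: "real mat \<Rightarrow> nat \<Rightarrow> real" where
  "row_sum A i = (\<Sum>j<dim_col A. A $$ (i,j))"

definition diag_of_vec :: "real vec \<Rightarrow> real mat" where
  "diag_of_vec v = mat (dim_vec v) (dim_vec v) (\<lambda>(i,j). if i = j then v $ i else 0)"

definition degree_mat :: "nat \<Rightarrow> (nat \<Rightarrow> real mat) \<Rightarrow> nat \<Rightarrow> real mat" where
  "degree_mat n W t = diag_of_vec (vec n (\<lambda>i. row_sum (W t) i))"

definition S_mat :: "nat \<Rightarrow> (nat \<Rightarrow> real mat) \<Rightarrow> nat \<Rightarrow> real mat" where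
  "S_mat n W t = diag_of_vec (vec n (\<lambda>i. 1 / row_sum (W t) i)) * W t"

text \<open>mu_aux k = mu_{k+1}: mu_1 = (1/n) 1, mu_{t+1} = S_t^T mu_t\<close>
primrec mu_aux :: "nat \<Rightarrow> (nat \<Rightarrow> real mat) \<Rightarrow> nat \<Rightarrow> real vec" where
  "mu_aux n W 0 = vec n (\<lambda>_. 1 / real n)"
| "mu_aux n W (Suc k) = transpose_mat (S_mat n W (Suc k)) *\<^sub>v mu_aux n W k"

definition mu :: "nat \<Rightarrow> (nat \<Rightarrow> real mat) \<Rightarrow> nat \<Rightarrow> real vec" where
  "mu n W t = mu_aux n W (t - 1)"

definition K_mat :: "nat \<Rightarrow> (nat \<Rightarrow> real mat) \<Rightarrow> nat \<Rightarrow> real mat" where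
  "K_mat n W t = S_mat n W t"

definition T_mat :: "nat \<Rightarrow> (nat \<Rightarrow> real mat) \<Rightarrow> nat \<Rightarrow> real mat" where
  "T_mat n W t = diag_of_vec (map_vec (\<lambda>x. 1 / x) (mu n W (t+1))) * transpose_mat (S_mat n W t)
                 * diag_of_vec (mu n W t)"

definition C_block :: "nat \<Rightarrow> nat \<Rightarrow> (nat \<Rightarrow> real mat) \<Rightarrow> nat \<Rightarrow> nat \<Rightarrow> real mat" where
  "C_block n M W s r =
     (if s = 1 \<and> r = 2 then K_mat n W 1
      else if 2 \<le> s \<and> s \<le> M - 1 \<and> r = s - 1 then (1/2) \<cdot>\<^sub>m T_mat n W (s - 1)
      else if 2 \<le> s \<and> s \<le> M - 1 \<and> r = s + 1 then (1/2) \<cdot>\<^sub>m K_mat n W s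
      else if s = M \<and> r = M - 1 then T_mat n W (M - 1)
      else 0\<^sub>m n n)"

definition C_mat :: "nat \<Rightarrow> nat \<Rightarrow> (nat \<Rightarrow> real mat) \<Rightarrow> real mat" where
  "C_mat n M W = mat (n*M) (n*M)
     (\<lambda>(p,q). C_block n M W (p div n + 1) (q div n + 1) $$ (p mod n, q mod n))"

definition L_mat :: "nat \<Rightarrow> nat \<Rightarrow> (nat \<Rightarrow> real mat) \<Rightarrow> real mat" where
  "L_mat n M W = 1\<^sub>m (n*M) - C_mat n M W"

end

theory Submission
  imports Defs
begin

text \<open>
  \<open>C\<close> is the transition matrix of a random walk on the \<open>nM\<close> vertex-time pairs:
  its entries are nonnegative and its rows sum to one. It satisfies detailed balance
  \<open>\<pi> p * C(p,q) = \<pi> q * C(q,p)\<close> for the weights \<open>\<pi>(t,i) = w t * \<mu> t i\<close>, where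
  \<open>w t = 1\<close> at the first and last time step and \<open>w t = 2\<close> otherwise; this is what
  the normalisation of \<open>T t\<close> by \<open>\<mu> t\<close> and \<open>\<mu> (t+1)\<close> is designed for. Detailed
  balance makes the spectrum of \<open>C\<close> real, and stochasticity bounds it by one in
  modulus. Moreover \<open>C\<close> only links consecutive time steps, so flipping the sign of
  an eigenvector on the odd time steps turns an eigenvalue \<open>\<lambda>\<close> into \<open>-\<lambda>\<close>.
\<close>

lemma reversible_eigenvalue_real:
  fixes c :: "nat \<Rightarrow> nat \<Rightarrow> real" and \<pi> :: "nat \<Rightarrow> real" and v :: "nat \<Rightarrow> complex"
  assumes pos: "\<And>p. p < N \<Longrightarrow> \<pi> p > 0"
    and balance: "\<And>p q. p < N \<Longrightarrow> q < N \<Longrightarrow> \<pi> p * c p q = \<pi> q * c q p"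
    and eigen: "\<And>p. p < N \<Longrightarrow> (\<Sum>q<N. complex_of_real (c p q) * v q) = \<kappa> * v p"
    and nonzero: "p0 < N" "v p0 \<noteq> 0"
  shows "Im \<kappa> = 0"
proof -
  define R where "R = (\<Sum>p<N. \<pi> p * (cmod (v p))\<^sup>2)"
  define Q where "Q = (\<Sum>p<N. \<Sum>q<N. complex_of_real (\<pi> p * c p q) * (cnj (v p) * v q))"
  have "0 < \<pi> p0 * (cmod (v p0))\<^sup>2"
    using pos nonzero by simp
  moreover have "0 \<le> \<pi> p * (cmod (v p))\<^sup>2" if "p < N" for p
    using pos[OF that] by simp
  ultimately have "R > 0"
    unfolding R_def using nonzero by (intro sum_pos2[of "{..<N}" p0]) auto
  have "Q = (\<Sum>p<N. complex_of_real (\<pi> p) * cnj (v p) * (\<Sum>q<N. complex_of_real (c p q) * v q))"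
    unfolding Q_def by (simp add: sum_distrib_left mult_ac)
  also have "\<dots> = (\<Sum>p<N. \<kappa> * (complex_of_real (\<pi> p) * (v p * cnj (v p))))"
    by (intro sum.cong refl) (subst eigen; simp add: mult_ac)
  also have "\<dots> = \<kappa> * complex_of_real R"
    unfolding R_def of_real_sum sum_distrib_left
    by (intro sum.cong refl) (simp only: of_real_mult complex_norm_square)
  finally have Q_eq: "Q = \<kappa> * complex_of_real R" .
  have "cnj Q = (\<Sum>p<N. \<Sum>q<N. complex_of_real (\<pi> p * c p q) * (cnj (v q) * v p))"
    unfolding Q_def by (simp add: mult_ac)
  also have "\<dots> = (\<Sum>q<N. \<Sum>p<N. complex_of_real (\<pi> p * c p q) * (cnj (v q) * v p))"
    by (rule sum.swap)
  also have "\<dots> = Q"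
    unfolding Q_def by (intro sum.cong refl) (simp add: balance)
  finally have "cnj \<kappa> * complex_of_real R = \<kappa> * complex_of_real R"
    using Q_eq by simp
  then have "cnj \<kappa> = \<kappa>"
    using \<open>R > 0\<close> by simp
  then show ?thesis
    by (metis cnj.sel(2) neg_equal_zero)
qed

lemma stochastic_eigenvalue_norm_le_one:
  fixes c :: "nat \<Rightarrow> nat \<Rightarrow> real" and v :: "nat \<Rightarrow> complex"
  assumes nonneg: "\<And>p q. p < N \<Longrightarrow> q < N \<Longrightarrow> c p q \<ge> 0"
    and row_sum: "\<And>p. p < N \<Longrightarrow> (\<Sum>q<N. c p q) = 1"
    and eigen: "\<And>p. p < N \<Longrightarrow> (\<Sum>q<N. complex_of_real (c p q) * v q) = \<kappa> * v p"
    and nonzero: "p0 < N" "v p0 \<noteq> 0"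
  shows "cmod \<kappa> \<le> 1"
proof -
  define m where "m = Max ((\<lambda>q. cmod (v q)) ` {..<N})"
  have le_m: "cmod (v q) \<le> m" if "q < N" for q
    unfolding m_def using that by (intro Max_ge) auto
  obtain p where p: "p < N" "cmod (v p) = m"
    using Max_in[of "(\<lambda>q. cmod (v q)) ` {..<N}"] nonzero unfolding m_def by fastforce
  have "m > 0"
    using le_m[of p0] nonzero by (meson norm_le_zero_iff not_le order_trans)
  have "cmod \<kappa> * m = cmod (\<Sum>q<N. complex_of_real (c p q) * v q)"
    using eigen p by (simp add: norm_mult)
  also have "\<dots> \<le> (\<Sum>q<N. cmod (complex_of_real (c p q) * v q))"
    by (rule norm_sum)
  also have "\<dots> \<le> (\<Sum>q<N. c p q * m)"
    using nonneg p le_m by (intro sum_mono) (simp add: norm_mult mult_left_mono)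
  also have "\<dots> = m"
    using row_sum p by (simp add: sum_distrib_right[symmetric])
  finally show ?thesis
    using \<open>m > 0\<close> by simp
qed

lemma bipartite_eigenvalue_uminus:
  fixes c :: "nat \<Rightarrow> nat \<Rightarrow> real" and v :: "nat \<Rightarrow> complex" and \<sigma> :: "nat \<Rightarrow> bool"
  assumes bipartite: "\<And>p q. p < N \<Longrightarrow> q < N \<Longrightarrow> c p q \<noteq> 0 \<Longrightarrow> \<sigma> p \<noteq> \<sigma> q"
    and eigen: "\<And>p. p < N \<Longrightarrow> (\<Sum>q<N. complex_of_real (c p q) * v q) = \<kappa> * v p"
    and "p < N"
  shows "(\<Sum>q<N. complex_of_real (c p q) * (if \<sigma> q then v q else - v q))
           = - \<kappa> * (if \<sigma> p then v p else - v p)"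
proof -
  have "(\<Sum>q<N. complex_of_real (c p q) * (if \<sigma> q then v q else - v q))
          = (if \<sigma> p then - 1 else 1) * (\<Sum>q<N. complex_of_real (c p q) * v q)"
    unfolding sum_distrib_left
    by (intro sum.cong refl) (use bipartite[OF \<open>p < N\<close>] in \<open>fastforce\<close>)
  then show ?thesis
    using eigen[OF \<open>p < N\<close>] by simp
qed

lemma eigenvalue_of_real_mat_iff:
  fixes P :: "real mat"
  assumes P: "P \<in> carrier_mat N N"
  shows "eigenvalue (map_mat complex_of_real P) \<kappa> \<longleftrightarrow>
    (\<exists>v. (\<exists>p<N. v p \<noteq> 0) \<and> (\<forall>p<N. (\<Sum>q<N. complex_of_real (P $$ (p,q)) * v q) = \<kappa> * v p))"
proof -
  have mult_index: "(map_mat complex_of_real P *\<^sub>v u) $ p = (\<Sum>q<N. complex_of_real (P $$ (p,q)) * u $ q)"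
    if "u \<in> carrier_vec N" "p < N" for u p
    using P that by (auto simp: scalar_prod_def lessThan_atLeast0 intro!: sum.cong)
  show ?thesis
  proof
    assume "eigenvalue (map_mat complex_of_real P) \<kappa>"
    then obtain u where u: "u \<in> carrier_vec N" "u \<noteq> 0\<^sub>v N" "map_mat complex_of_real P *\<^sub>v u = \<kappa> \<cdot>\<^sub>v u"
      using P unfolding eigenvalue_def eigenvector_def by auto
    then have "\<exists>p<N. u $ p \<noteq> 0"
      by (metis carrier_vecD eq_vecI index_zero_vec)
    moreover have "\<forall>p<N. (\<Sum>q<N. complex_of_real (P $$ (p,q)) * u $ q) = \<kappa> * u $ p"
      using u by (metis mult_index carrier_vecD index_smult_vec(1))
    ultimately show "\<exists>v. (\<exists>p<N. v p \<noteq> 0) \<and> (\<forall>p<N. (\<Sum>q<N. complex_of_real (P $$ (p,q)) * v q) = \<kappa> * v p)"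
      by blast
  next
    assume "\<exists>v. (\<exists>p<N. v p \<noteq> 0) \<and> (\<forall>p<N. (\<Sum>q<N. complex_of_real (P $$ (p,q)) * v q) = \<kappa> * v p)"
    then obtain v p0 where "p0 < N" "v p0 \<noteq> 0"
      and eigen: "\<And>p. p < N \<Longrightarrow> (\<Sum>q<N. complex_of_real (P $$ (p,q)) * v q) = \<kappa> * v p"
      by blast
    then have "vec N v \<noteq> 0\<^sub>v N"
      by (metis index_vec index_zero_vec(1))
    moreover have "map_mat complex_of_real P *\<^sub>v vec N v = \<kappa> \<cdot>\<^sub>v vec N v"
    proof (rule eq_vecI)
      show "(map_mat complex_of_real P *\<^sub>v vec N v) $ p = (\<kappa> \<cdot>\<^sub>v vec N v) $ p"
        if "p < dim_vec (\<kappa> \<cdot>\<^sub>v vec N v)" for p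
        using that by (subst mult_index) (simp_all add: eigen)
    qed (use P in simp)
    ultimately show "eigenvalue (map_mat complex_of_real P) \<kappa>"
      using P unfolding eigenvalue_def eigenvector_def by (auto intro!: exI[of _ "vec N v"])
  qed
qed

lemma eigenvalue_one_minus_mat_iff:
  fixes P :: "real mat"
  assumes P: "P \<in> carrier_mat N N"
  shows "eigenvalue (map_mat complex_of_real (1\<^sub>m N - P)) \<nu> \<longleftrightarrow>
    eigenvalue (map_mat complex_of_real P) (1 - \<nu>)"
proof -
  have "(\<Sum>q<N. complex_of_real ((1\<^sub>m N - P) $$ (p,q)) * v q) = \<nu> * v p \<longleftrightarrow>
          (\<Sum>q<N. complex_of_real (P $$ (p,q)) * v q) = (1 - \<nu>) * v p"
    if "p < N" for p and v :: "nat \<Rightarrow> complex"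
  proof -
    have "(\<Sum>q<N. complex_of_real ((1\<^sub>m N - P) $$ (p,q)) * v q)
            = (\<Sum>q<N. (if p = q then v q else 0) - complex_of_real (P $$ (p,q)) * v q)"
      using P \<open>p < N\<close> by (intro sum.cong refl) (simp add: left_diff_distrib)
    also have "\<dots> = v p - (\<Sum>q<N. complex_of_real (P $$ (p,q)) * v q)"
      using \<open>p < N\<close> by (simp add: sum_subtractf)
    moreover have "v p - s = \<nu> * v p \<longleftrightarrow> s = (1 - \<nu>) * v p" for s
      by (auto simp: algebra_simps)
    ultimately show ?thesis
      by (simp only:)
  qed
  then show ?thesis
    unfolding eigenvalue_of_real_mat_iff[OF P] eigenvalue_of_real_mat_iff[OF minus_carrier_mat[OF P]]
    by blast
qed

lemma reversible_bipartite_laplacian_eigenvalue: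
  fixes P :: "real mat" and \<pi> :: "nat \<Rightarrow> real" and \<sigma> :: "nat \<Rightarrow> bool"
  assumes P: "P \<in> carrier_mat N N"
    and nonneg: "\<And>p q. p < N \<Longrightarrow> q < N \<Longrightarrow> P $$ (p,q) \<ge> 0"
    and row_sum: "\<And>p. p < N \<Longrightarrow> (\<Sum>q<N. P $$ (p,q)) = 1"
    and pos: "\<And>p. p < N \<Longrightarrow> \<pi> p > 0"
    and balance: "\<And>p q. p < N \<Longrightarrow> q < N \<Longrightarrow> \<pi> p * P $$ (p,q) = \<pi> q * P $$ (q,p)"
    and bipartite: "\<And>p q. p < N \<Longrightarrow> q < N \<Longrightarrow> P $$ (p,q) \<noteq> 0 \<Longrightarrow> \<sigma> p \<noteq> \<sigma> q"
    and eigenvalue: "eigenvalue (map_mat complex_of_real (1\<^sub>m N - P)) \<nu>"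
  shows "Im \<nu> = 0 \<and> 0 \<le> Re \<nu> \<and> Re \<nu> \<le> 2 \<and>
    eigenvalue (map_mat complex_of_real (1\<^sub>m N - P)) (2 - \<nu>)"
proof -
  obtain v p0 where nonzero: "p0 < N" "v p0 \<noteq> 0"
    and eigen: "\<And>p. p < N \<Longrightarrow> (\<Sum>q<N. complex_of_real (P $$ (p,q)) * v q) = (1 - \<nu>) * v p"
    using eigenvalue unfolding eigenvalue_one_minus_mat_iff[OF P] eigenvalue_of_real_mat_iff[OF P]
    by blast
  have "Im (1 - \<nu>) = 0"
    using pos balance eigen nonzero by (rule reversible_eigenvalue_real)
  then have real: "Im \<nu> = 0"
    by simp
  have "cmod (1 - \<nu>) \<le> 1"
    using nonneg row_sum eigen nonzero by (rule stochastic_eigenvalue_norm_le_one)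
  then have "\<bar>1 - Re \<nu>\<bar> \<le> 1"
    using real by (simp add: cmod_eq_Re)
  moreover have "eigenvalue (map_mat complex_of_real P) (1 - (2 - \<nu>))"
  proof -
    let ?w = "\<lambda>p. if \<sigma> p then v p else - v p"
    have "\<forall>p<N. (\<Sum>q<N. complex_of_real (P $$ (p,q)) * ?w q) = (1 - (2 - \<nu>)) * ?w p"
      using bipartite_eigenvalue_uminus[OF bipartite eigen] by simp
    moreover have "p0 < N \<and> ?w p0 \<noteq> 0"
      using nonzero by simp
    ultimately show ?thesis
      unfolding eigenvalue_of_real_mat_iff[OF P] by (intro exI[of _ ?w]) blast
  qed
  ultimately show ?thesis
    using real unfolding eigenvalue_one_minus_mat_iff[OF P] by linarith
qed

lemma diag_of_vec_carrier: "diag_of_vec v \<in> carrier_mat (dim_vec v) (dim_vec v)"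
  by (simp add: diag_of_vec_def)

lemma diag_of_vec_mult_index:
  assumes "A \<in> carrier_mat (dim_vec v) nc" "i < dim_vec v" "j < nc"
  shows "(diag_of_vec v * A) $$ (i,j) = v $ i * A $$ (i,j)"
  using assms by (simp add: diag_of_vec_def scalar_prod_def if_distrib[of "\<lambda>x. x * _"] cong: if_cong)

lemma mult_diag_of_vec_index:
  assumes "A \<in> carrier_mat nr (dim_vec v)" "i < nr" "j < dim_vec v"
  shows "(A * diag_of_vec v) $$ (i,j) = A $$ (i,j) * v $ j"
  using assms by (simp add: diag_of_vec_def scalar_prod_def if_distrib[of "\<lambda>x. _ * x"] cong: if_cong)

lemma sum_block_indicator:
  fixes g :: "nat \<Rightarrow> 'a::comm_monoid_add"
  shows "(\<Sum>q<n*M. if q div n = b then g (q mod n) else 0) = (if b < M then \<Sum>j<n. g j else 0)"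
proof -
  have block: "(\<Sum>q\<in>{c*n..<c*n+n}. if q div n = b then g (q mod n) else 0) = (if c = b then \<Sum>j<n. g j else 0)" for c
  proof -
    have "(\<Sum>q\<in>{c*n..<c*n+n}. if q div n = b then g (q mod n) else 0)
            = (\<Sum>j=0..<n. if (j + c*n) div n = b then g ((j + c*n) mod n) else 0)"
      using sum.shift_bounds_nat_ivl[of "\<lambda>q. if q div n = b then g (q mod n) else 0" 0 "c*n" n]
      by (simp only: add_0 add.commute)
    also have "\<dots> = (\<Sum>j<n. if c = b then g j else 0)"
      by (auto simp: lessThan_atLeast0 intro!: sum.cong)
    finally show ?thesis by simp
  qed
  have "(\<Sum>q<n*M. if q div n = b then g (q mod n) else 0)
          = (\<Sum>c<M. \<Sum>q\<in>{c*n..<c*n+n}. if q div n = b then g (q mod n) else 0)"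
    by (simp add: sum.nat_group mult.commute)
  also have "\<dots> = (if b < M then \<Sum>j<n. g j else 0)"
    by (simp add: block)
  finally show ?thesis .
qed

lemma div_mod_less_of_less_mult:
  fixes p n M :: nat
  assumes "p < n * M"
  shows "p div n < M" "p mod n < n"
proof -
  show "p div n < M"
    using assms by (simp add: less_mult_imp_div_less mult.commute)
  have "n > 0"
    using assms by (cases n) auto
  then show "p mod n < n"
    by simp
qed

locale time_evolving_graph =
  fixes n M :: nat and W :: "nat \<Rightarrow> real mat"
  assumes two_le_M: "M \<ge> 2"
    and W_carrier: "\<And>t. t \<in> {1..M} \<Longrightarrow> W t \<in> carrier_mat n n"
    and W_nonneg: "\<And>t i j. t \<in> {1..M} \<Longrightarrow> i < n \<Longrightarrow> j < n \<Longrightarrow> W t $$ (i,j) \<ge> 0"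
    and row_sum_pos: "\<And>t i. t \<in> {1..M} \<Longrightarrow> i < n \<Longrightarrow> row_sum (W t) i > 0"
    and mu_pos: "\<And>t i. t \<in> {1..M} \<Longrightarrow> i < n \<Longrightarrow> mu n W t $ i > 0"
begin

abbreviation S :: "nat \<Rightarrow> real mat" where "S \<equiv> S_mat n W"
abbreviation T :: "nat \<Rightarrow> real mat" where "T \<equiv> T_mat n W"
abbreviation \<mu> :: "nat \<Rightarrow> real vec" where "\<mu> \<equiv> mu n W"

lemma S_carrier: "t \<in> {1..M} \<Longrightarrow> S t \<in> carrier_mat n n"
  using W_carrier[of t] by (intro carrier_matI) (auto simp: S_mat_def diag_of_vec_def)

lemma S_index: "t \<in> {1..M} \<Longrightarrow> i < n \<Longrightarrow> j < n \<Longrightarrow> S t $$ (i,j) = W t $$ (i,j) / row_sum (W t) i"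
  unfolding S_mat_def by (subst diag_of_vec_mult_index) (use W_carrier in auto)

lemma S_nonneg: "t \<in> {1..M} \<Longrightarrow> i < n \<Longrightarrow> j < n \<Longrightarrow> S t $$ (i,j) \<ge> 0"
  using W_nonneg row_sum_pos by (simp add: S_index less_imp_le)

lemma S_row_sum:
  assumes "t \<in> {1..M}" "i < n"
  shows "(\<Sum>j<n. S t $$ (i,j)) = 1"
  using assms W_carrier[OF assms(1)] row_sum_pos[OF assms]
  by (simp add: S_index row_sum_def lessThan_atLeast0 sum_divide_distrib[symmetric])

lemma mu_carrier:
  assumes "t \<in> {1..M}"
  shows "\<mu> t \<in> carrier_vec n"
proof -
  have "k < M \<Longrightarrow> mu_aux n W k \<in> carrier_vec n" for k
  proof (induction k)
    case (Suc k)
    then show ?case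
      using S_carrier[of "Suc k"] by simp
  qed simp
  moreover have "t - 1 < M"
    using assms by auto
  ultimately show ?thesis
    unfolding mu_def by blast
qed

lemma mu_Suc_index:
  assumes "t \<in> {1..<M}" "i < n"
  shows "\<mu> (t+1) $ i = (\<Sum>j<n. S t $$ (j,i) * \<mu> t $ j)"
proof -
  have "\<mu> (t+1) = transpose_mat (S t) *\<^sub>v \<mu> t"
    using assms unfolding mu_def by (cases t) auto
  then show ?thesis
    using assms S_carrier[of t] mu_carrier[of t]
    by (auto simp: scalar_prod_def lessThan_atLeast0 intro!: sum.cong)
qed

lemma T_carrier: "t \<in> {1..<M} \<Longrightarrow> T t \<in> carrier_mat n n"
  using S_carrier[of t] mu_carrier[of t] mu_carrier[of "t+1"]
  by (intro carrier_matI) (auto simp: T_mat_def diag_of_vec_def)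

lemma T_index:
  assumes "t \<in> {1..<M}" "i < n" "j < n"
  shows "T t $$ (i,j) = S t $$ (j,i) * \<mu> t $ j / \<mu> (t+1) $ i"
proof -
  have S: "S t \<in> carrier_mat n n" and \<mu>: "\<mu> t \<in> carrier_vec n" "\<mu> (t+1) \<in> carrier_vec n"
    using S_carrier mu_carrier assms by auto
  let ?D = "diag_of_vec (map_vec (\<lambda>x. 1 / x) (\<mu> (t+1)))"
  have "?D * transpose_mat (S t) \<in> carrier_mat n n"
    using S \<mu> diag_of_vec_carrier[of "map_vec (\<lambda>x. 1 / x) (\<mu> (t+1))"] by auto
  then have "T t $$ (i,j) = (?D * transpose_mat (S t)) $$ (i,j) * \<mu> t $ j"
    unfolding T_mat_def using \<mu> assms by (subst mult_diag_of_vec_index) auto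
  also have "\<dots> = S t $$ (j,i) * \<mu> t $ j / \<mu> (t+1) $ i"
    using S \<mu> assms by (subst diag_of_vec_mult_index) auto
  finally show ?thesis .
qed

lemma T_nonneg: "t \<in> {1..<M} \<Longrightarrow> i < n \<Longrightarrow> j < n \<Longrightarrow> T t $$ (i,j) \<ge> 0"
  using S_nonneg[of t j i] mu_pos[of t j] mu_pos[of "t+1" i] by (simp add: T_index)

text \<open>The rows of \<open>T t\<close> sum to one precisely because \<open>\<mu> (t+1) = (S t)\<^sup>T \<mu> t\<close>.\<close>
lemma T_row_sum:
  assumes "t \<in> {1..<M}" "i < n"
  shows "(\<Sum>j<n. T t $$ (i,j)) = 1"
  using assms mu_pos[of "t+1" i]
  by (simp add: T_index sum_divide_distrib[symmetric] mu_Suc_index[symmetric])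

text \<open>Block row \<open>s\<close> of \<open>C\<close> is \<open>[T (s-1) | S s] / block_weight s\<close>: the factor \<open>1/2\<close> of the
  paper appears exactly in the rows that have two neighbouring blocks.\<close>
definition block_weight :: "nat \<Rightarrow> real" where
  "block_weight s = (if s = 1 \<or> s = M then 1 else 2)"

lemma block_weight_pos: "block_weight s > 0"
  by (simp add: block_weight_def)

lemma C_block_index:
  assumes "s \<in> {1..M}" "r \<in> {1..M}" "i < n" "j < n"
  shows "C_block n M W s r $$ (i,j) =
    (if r = s + 1 then S s $$ (i,j) / block_weight s
     else if s = r + 1 then T r $$ (i,j) / block_weight s else 0)"
proof -
  consider "r = s + 1" | "s = r + 1" | "r \<noteq> s + 1" "s \<noteq> r + 1"
    by blast
  then show ?thesis
  proof cases
    case 1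
    then show ?thesis
      using assms S_carrier[of s] by (auto simp: C_block_def K_mat_def block_weight_def)
  next
    case 2
    then show ?thesis
      using assms T_carrier[of r] by (auto simp: C_block_def block_weight_def)
  next
    case 3
    then show ?thesis
      using assms by (auto simp: C_block_def)
  qed
qed

lemma C_mat_index:
  assumes "p < n * M" "q < n * M"
  shows "C_mat n M W $$ (p,q) =
    (if q div n = p div n + 1 then S (p div n + 1) $$ (p mod n, q mod n) / block_weight (p div n + 1)
     else if p div n = q div n + 1 then T (p div n) $$ (p mod n, q mod n) / block_weight (p div n + 1)
     else 0)"
  using assms div_mod_less_of_less_mult[OF assms(1)] div_mod_less_of_less_mult[OF assms(2)]
  by (simp add: C_mat_def C_block_index)

lemma C_mat_nonneg:
  assumes "p < n * M" "q < n * M"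
  shows "C_mat n M W $$ (p,q) \<ge> 0"
  using div_mod_less_of_less_mult[OF assms(1)] div_mod_less_of_less_mult[OF assms(2)]
    S_nonneg T_nonneg block_weight_pos
  by (auto simp: C_mat_index[OF assms] intro!: divide_nonneg_pos)

lemma C_mat_bipartite:
  assumes "p < n * M" "q < n * M" "C_mat n M W $$ (p,q) \<noteq> 0"
  shows "even (p div n) \<noteq> even (q div n)"
  using assms(3) by (auto simp: C_mat_index[OF assms(1,2)] split: if_splits)

lemma C_mat_row_sum:
  assumes "p < n * M"
  shows "(\<Sum>q<n*M. C_mat n M W $$ (p,q)) = 1"
proof -
  define b i where "b = p div n" and "i = p mod n"
  have b: "b < M" and i: "i < n"
    using div_mod_less_of_less_mult[OF assms] unfolding b_def i_def by auto
  let ?w = "block_weight (b + 1)"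
  have "C_mat n M W $$ (p,q) =
          (if q div n = b + 1 then S (b + 1) $$ (i, q mod n) / ?w else 0)
          + (if q div n = b - 1 \<and> 0 < b then T b $$ (i, q mod n) / ?w else 0)" if "q < n * M" for q
    unfolding C_mat_index[OF assms that] b_def i_def by auto
  then have "(\<Sum>q<n*M. C_mat n M W $$ (p,q)) =
          (\<Sum>q<n*M. if q div n = b + 1 then S (b + 1) $$ (i, q mod n) / ?w else 0)
          + (\<Sum>q<n*M. if q div n = b - 1 \<and> 0 < b then T b $$ (i, q mod n) / ?w else 0)"
    by (simp add: sum.distrib)
  also have "(\<Sum>q<n*M. if q div n = b + 1 then S (b + 1) $$ (i, q mod n) / ?w else 0)
               = (if b + 1 < M then 1 / ?w else 0)"
    using sum_block_indicator[where b = "b + 1" and g = "\<lambda>j. S (b + 1) $$ (i,j) / ?w"] S_row_sum[of "b + 1" i] b i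
    by (simp add: sum_divide_distrib[symmetric])
  also have "(\<Sum>q<n*M. if q div n = b - 1 \<and> 0 < b then T b $$ (i, q mod n) / ?w else 0)
               = (if 0 < b then 1 / ?w else 0)"
    using sum_block_indicator[where b = "b - 1" and g = "\<lambda>j. T b $$ (i,j) / ?w"] T_row_sum[of b i] b i
    by (simp add: sum_divide_distrib[symmetric])
  also have "(if b + 1 < M then 1 / ?w else 0) + (if 0 < b then 1 / ?w else 0) = 1"
    using b two_le_M by (simp add: block_weight_def)
  finally show ?thesis .
qed

definition stationary_weight :: "nat \<Rightarrow> real" where
  "stationary_weight p = block_weight (p div n + 1) * \<mu> (p div n + 1) $ (p mod n)"

lemma stationary_weight_pos: "p < n * M \<Longrightarrow> stationary_weight p > 0"
  using div_mod_less_of_less_mult[of p n M] block_weight_pos mu_pos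
  by (simp add: stationary_weight_def)

lemma C_mat_detailed_balance_step:
  assumes "p < n * M" "q < n * M" and step: "q div n = p div n + 1"
  shows "stationary_weight p * C_mat n M W $$ (p,q) = stationary_weight q * C_mat n M W $$ (q,p)"
proof -
  define t i j where "t = p div n + 1" and "i = p mod n" and "j = q mod n"
  have t: "t \<in> {1..<M}" and i: "i < n" and j: "j < n"
    using div_mod_less_of_less_mult[OF assms(1)] div_mod_less_of_less_mult[OF assms(2)] step
    unfolding t_def i_def j_def by auto
  have "stationary_weight p * C_mat n M W $$ (p,q) = S t $$ (i,j) * \<mu> t $ i"
    using step block_weight_pos[of t]
    by (simp add: C_mat_index[OF assms(1,2)] stationary_weight_def t_def i_def j_def)
  also have "\<dots> = \<mu> (t + 1) $ j * T t $$ (j,i)"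
    using T_index[OF t j i] mu_pos[of "t + 1" j] t j by simp
  also have "\<dots> = stationary_weight q * C_mat n M W $$ (q,p)"
    using step block_weight_pos[of "t + 1"]
    by (simp add: C_mat_index[OF assms(2,1)] stationary_weight_def t_def i_def j_def)
  finally show ?thesis .
qed

lemma C_mat_detailed_balance:
  assumes "p < n * M" "q < n * M"
  shows "stationary_weight p * C_mat n M W $$ (p,q) = stationary_weight q * C_mat n M W $$ (q,p)"
proof -
  consider "q div n = p div n + 1" | "p div n = q div n + 1"
    | "q div n \<noteq> p div n + 1" "p div n \<noteq> q div n + 1"
    by blast
  then show ?thesis
  proof cases
    case 1
    then show ?thesis
      using C_mat_detailed_balance_step[OF assms] by simp
  next
    case 2
    then show ?thesis
      using C_mat_detailed_balance_step[OF assms(2,1)] by simp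
  next
    case 3
    then show ?thesis
      by (simp add: C_mat_index[OF assms] C_mat_index[OF assms(2,1)])
  qed
qed

end

theorem corollary1:
  fixes n M :: nat and W :: "nat \<Rightarrow> real mat"
  assumes "n \<ge> 2" and "M \<ge> 2"
    and "\<And>t. t \<in> {1..M} \<Longrightarrow> W t \<in> carrier_mat n n"
    and "\<And>t i j. t \<in> {1..M} \<Longrightarrow> i < n \<Longrightarrow> j < n \<Longrightarrow> W t $$ (i,j) \<ge> 0"
    and "\<And>t i. t \<in> {1..M} \<Longrightarrow> i < n \<Longrightarrow> row_sum (W t) i > 0"
    and "\<And>t i. t \<in> {1..M} \<Longrightarrow> i < n \<Longrightarrow> mu n W t $ i > 0"
  shows "\<forall>\<nu>. eigenvalue (map_mat complex_of_real (L_mat n M W)) \<nu> \<longrightarrow>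
           Im \<nu> = 0 \<and> 0 \<le> Re \<nu> \<and> Re \<nu> \<le> 2 \<and>
           eigenvalue (map_mat complex_of_real (L_mat n M W)) (2 - \<nu>)"
proof -
  interpret time_evolving_graph n M W
    using assms(2-) by unfold_locales
  have C: "C_mat n M W \<in> carrier_mat (n * M) (n * M)"
    by (simp add: C_mat_def)
  show ?thesis
    unfolding L_mat_def
  proof (intro allI impI)
    fix \<nu>
    assume "eigenvalue (map_mat complex_of_real (1\<^sub>m (n * M) - C_mat n M W)) \<nu>"
    then show "Im \<nu> = 0 \<and> 0 \<le> Re \<nu> \<and> Re \<nu> \<le> 2 \<and>
        eigenvalue (map_mat complex_of_real (1\<^sub>m (n * M) - C_mat n M W)) (2 - \<nu>)"
      by (intro reversible_bipartite_laplacian_eigenvalue[OF C,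
            where \<pi> = stationary_weight and \<sigma> = "\<lambda>p. even (p div n)"])
        (simp_all add: C_mat_nonneg C_mat_row_sum stationary_weight_pos C_mat_detailed_balance
           C_mat_bipartite)
  qed
qed

end
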